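(* Let $\Omega\subset\mathbb{R}^d$ be open with Lipschitz boundary, $\pi\in\mathcal M^+(\Omega)$ with $\pi(\Omega)>0$, and let $\varphi:[0,\infty)\to[0,\infty]$ be convex with $\varphi(1)=\varphi'(1)=0$ and $\varphi''(1)=1$. Then there is no constant $c>0$ such that $$\int\Big|\nabla\Big(\varphi'\big(\tfrac{d\mu}{d\pi}\big)\Big)\Big|^2\,d\mu\ \ge\ c\,\mathrm{D}_\varphi(\mu|\pi)$$ holds for all $\mu\in\mathcal M^+(\Omega)$.
   Context: $\mathrm{D}_\varphi(\mu|\nu)=\int\varphi(\frac{d\mu}{d\nu})\,d\nu$ if $\mu\ll\nu$, $+\infty$ otherwise. $\mathcal M^+(\Omega)$: nonnegative finite measures. *)

theory Defs
  imports "HOL-Analysis.Analysis"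
begin

definition lipschitz_boundary :: "'a::euclidean_space set \<Rightarrow> bool" where
  "lipschitz_boundary \<Omega> \<longleftrightarrow>
     (\<forall>x\<in>frontier \<Omega>. \<exists>r>0. \<exists>e. norm e = 1 \<and> (\<exists>g L. lipschitz_on L {z. z \<bullet> e = 0} g \<and>
        \<Omega> \<inter> ball x r = {y \<in> ball x r. y \<bullet> e > g (y - (y \<bullet> e) *\<^sub>R e)}))"

definition finite_measures_on :: "'a::euclidean_space set \<Rightarrow> 'a measure set" where
  "finite_measures_on \<Omega> =
     {\<mu>. sets \<mu> = sets (restrict_space borel \<Omega>) \<and> finite_measure \<mu>}"

definition convex_ennreal_on_nonneg :: "(real \<Rightarrow> ennreal) \<Rightarrow> bool" where
  "convex_ennreal_on_nonneg \<phi> \<longleftrightarrow>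
     (\<forall>x\<ge>0. \<forall>y\<ge>0. \<forall>t\<in>{0..1}.
        \<phi> ((1 - t) * x + t * y) \<le> ennreal (1 - t) * \<phi> x + ennreal t * \<phi> y)"

definition phi_div :: "(real \<Rightarrow> ennreal) \<Rightarrow> 'a measure \<Rightarrow> 'a measure \<Rightarrow> ennreal" where
  "phi_div \<phi> \<mu> \<nu> =
     (if absolutely_continuous \<nu> \<mu>
      then \<integral>\<^sup>+ x. \<phi> (enn2real (RN_deriv \<nu> \<mu> x)) \<partial>\<nu> else \<infinity>)"

end

theory Submission
  imports Defs
begin

text \<open>Constant densities \<open>\<mu> = k \<pi>\<close> have \<open>\<nabla>\<phi>'(d\<mu>/d\<pi>) = 0\<close>, so the left-hand side of the
  inequality vanishes, whereas \<open>D\<^sub>\<phi>(k \<pi>|\<pi>) = \<phi>(k) \<pi>(\<Omega>)\<close>. Since \<open>\<phi>''(1) = 1\<close>, \<open>\<phi>\<close> cannot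
  vanish identically near 1, which yields a \<open>k\<close> with \<open>\<phi>(k) > 0\<close>.\<close>

lemma has_real_derivative_eventually_zero_imp_zero:
  assumes "\<forall>\<^sub>F x in nhds a. f x = 0" and "(f has_real_derivative D) (at a)"
  shows "D = 0"
proof -
  have "((\<lambda>_. 0) has_real_derivative D) (at a)"
    using assms by (subst DERIV_cong_ev[where g = f]) simp_all
  then show ?thesis
    using DERIV_const DERIV_unique by blast
qed

lemma nonzero_second_derivative_imp_not_eventually_zero:
  assumes "\<forall>\<^sub>F x in nhds a. (f has_real_derivative f' x) (at x)"
    and "(f' has_real_derivative D) (at a)" and "D \<noteq> 0"
  shows "\<not> (\<forall>\<^sub>F x in nhds a. f x = 0)"
proof
  assume "\<forall>\<^sub>F x in nhds a. f x = 0"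
  then have "\<forall>\<^sub>F x in nhds a. \<forall>\<^sub>F y in nhds x. f y = 0"
    by (simp add: eventually_eventually)
  with assms(1) have "\<forall>\<^sub>F x in nhds a. f' x = 0"
    by eventually_elim (rule has_real_derivative_eventually_zero_imp_zero)
  with assms(2,3) show False
    using has_real_derivative_eventually_zero_imp_zero by blast
qed

lemma exists_differentiable_point_nonzero:
  fixes \<phi> :: "real \<Rightarrow> ennreal"
  assumes "\<epsilon> > 0"
    and "\<And>x. x \<in> ball 1 \<epsilon> \<Longrightarrow> ((\<lambda>t. enn2real (\<phi> t)) has_real_derivative \<phi>1 x) (at x)"
    and "(\<phi>1 has_real_derivative 1) (at 1)"
  obtains k where "k \<ge> 0" "\<phi> k \<noteq> 0" "(\<lambda>t. enn2real (\<phi> t)) differentiable (at k)"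
proof -
  have "\<forall>\<^sub>F x in nhds 1. x \<in> ball 1 (min \<epsilon> 1)"
    using assms(1) by (intro eventually_nhds_in_open) auto
  then have near_1: "\<forall>\<^sub>F x in nhds 1. x \<ge> 0 \<and>
      ((\<lambda>t. enn2real (\<phi> t)) has_real_derivative \<phi>1 x) (at x)"
    by eventually_elim (auto simp: dist_real_def intro: assms(2))
  have not_locally_zero: "\<not> (\<forall>\<^sub>F x in nhds 1. enn2real (\<phi> x) = 0)"
    using near_1 assms(3)
    by (intro nonzero_second_derivative_imp_not_eventually_zero) (auto elim: eventually_mono)
  have "\<exists>k. k \<ge> 0 \<and> enn2real (\<phi> k) \<noteq> 0 \<and>
      ((\<lambda>t. enn2real (\<phi> t)) has_real_derivative \<phi>1 k) (at k)"
  proof (rule ccontr)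
    assume "\<not> ?thesis"
    then have "\<forall>\<^sub>F x in nhds 1. enn2real (\<phi> x) = 0"
      using near_1 by (auto elim: eventually_mono)
    with not_locally_zero show False ..
  qed
  then show ?thesis
    using that real_differentiable_def by fastforce
qed

lemma density_const_in_finite_measures_on:
  assumes "\<pi> \<in> finite_measures_on \<Omega>"
  shows "density \<pi> (\<lambda>_. ennreal k) \<in> finite_measures_on \<Omega>"
proof -
  interpret finite_measure \<pi>
    using assms by (simp add: finite_measures_on_def)
  have "emeasure (density \<pi> (\<lambda>_. ennreal k)) (space \<pi>) = ennreal k * emeasure \<pi> (space \<pi>)"
    by (simp add: emeasure_density)
  then have "finite_measure (density \<pi> (\<lambda>_. ennreal k))"
    by (intro finite_measureI) (simp add: ennreal_mult_eq_top_iff)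
  then show ?thesis
    using assms by (simp add: finite_measures_on_def)
qed

lemma phi_div_density_const:
  assumes "finite_measure \<pi>" and "k \<ge> 0"
  shows "phi_div \<phi> (density \<pi> (\<lambda>_. ennreal k)) \<pi> = \<phi> k * emeasure \<pi> (space \<pi>)"
proof -
  interpret finite_measure \<pi> by fact
  have "AE x in \<pi>. RN_deriv \<pi> (density \<pi> (\<lambda>_. ennreal k)) x = ennreal k"
    using RN_deriv_unique[of "\<lambda>_. ennreal k" "density \<pi> (\<lambda>_. ennreal k)"] by auto
  then have "AE x in \<pi>. \<phi> (enn2real (RN_deriv \<pi> (density \<pi> (\<lambda>_. ennreal k)) x)) = \<phi> k"
    by eventually_elim (simp add: assms(2))
  then show ?thesis
    unfolding phi_div_def
    by (simp add: absolutely_continuousI_density nn_integral_cong_AE)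
qed

theorem mainTheorem11:
  fixes \<Omega> :: "'a::euclidean_space set"
    and \<pi> :: "'a measure"
    and \<phi> :: "real \<Rightarrow> ennreal"
  assumes "open \<Omega>" and "lipschitz_boundary \<Omega>"
    and "\<pi> \<in> finite_measures_on \<Omega>" and "emeasure \<pi> \<Omega> > 0"
    and "convex_ennreal_on_nonneg \<phi>"
    and "\<exists>\<epsilon>>0. \<exists>\<phi>1. (\<forall>x\<in>ball 1 \<epsilon>. \<phi> x < \<infinity> \<and>
            ((\<lambda>t. enn2real (\<phi> t)) has_real_derivative \<phi>1 x) (at x))
          \<and> \<phi>1 1 = 0 \<and> (\<phi>1 has_real_derivative 1) (at 1)"
    and "\<phi> 1 = 0"
  shows "\<not> (\<exists>c>0. \<forall>\<mu> \<in> finite_measures_on \<Omega>. \<forall>\<rho> G.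
            \<rho> \<in> borel_measurable \<pi> \<and> (\<forall>x\<in>\<Omega>. \<rho> x \<ge> 0) \<and>
            \<mu> = density \<pi> (\<lambda>x. ennreal (\<rho> x)) \<and>
            (\<forall>x\<in>\<Omega>. (\<lambda>t. enn2real (\<phi> t)) differentiable (at (\<rho> x))) \<and>
            (\<forall>x\<in>\<Omega>. GDERIV (\<lambda>y. deriv (\<lambda>t. enn2real (\<phi> t)) (\<rho> y)) x :> G x)
            \<longrightarrow> (\<integral>\<^sup>+ x. ennreal ((norm (G x))\<^sup>2) \<partial>\<mu>) \<ge> ennreal c * phi_div \<phi> \<mu> \<pi>)"
    (is "\<not> (\<exists>c>0. ?inequality c)")
proof
  assume "\<exists>c>0. ?inequality c"
  then obtain c where "c > 0" and ineq: "?inequality c" by blast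
  obtain k where k: "k \<ge> 0" "\<phi> k \<noteq> 0" "(\<lambda>t. enn2real (\<phi> t)) differentiable (at k)"
    using assms(6) exists_differentiable_point_nonzero by metis
  have sets: "sets \<pi> = sets (restrict_space borel \<Omega>)" and fin: "finite_measure \<pi>"
    using assms(3) by (auto simp: finite_measures_on_def)
  have "space \<pi> = \<Omega>"
    using sets_eq_imp_space_eq[OF sets] by (simp add: space_restrict_space)
  then have "phi_div \<phi> (density \<pi> (\<lambda>_. ennreal k)) \<pi> = \<phi> k * emeasure \<pi> \<Omega>"
    using phi_div_density_const[OF fin k(1)] by simp
  moreover have "GDERIV (\<lambda>y. deriv (\<lambda>t. enn2real (\<phi> t)) k) x :> 0" for x :: 'a
    unfolding gderiv_def by simp
  moreover note ineq[rule_format, OF density_const_in_finite_measures_on[OF assms(3), of k],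
      of "\<lambda>_. k" "\<lambda>_. 0"]
  ultimately have "0 \<ge> ennreal c * (\<phi> k * emeasure \<pi> \<Omega>)"
    using k(1,3) by simp
  with \<open>c > 0\<close> k(2) assms(4) show False
    by (simp add: ennreal_mult_eq_top_iff)
qed

end
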